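(* If the semigroup $\mathbb NA$ is scored, then $\mathbb Q(A\cap\tau)\cap\mathbb Z^d=\mathbb Z(A\cap\tau)$ for all faces $\tau$ of the cone $\mathbb R_{\ge0}A$.
   Context: $A\subset\mathbb Z^d$ is a finite set generating the group $\mathbb Z^d$; $\mathbb NA$ its monoid. For a facet $\sigma$ of $\mathbb R_{\ge0}A$, $F_\sigma$ is the unique linear form with $F_\sigma(\mathbb R_{\ge0}A)\ge0$, $F_\sigma(\sigma)=0$, $F_\sigma(\mathbb Z^d)=\mathbb Z$. $\mathbb NA$ is scored if $\mathbb NA=\bigcap_{\sigma\text{ facet}}\{\mathbf a\in\mathbb Z^d:F_\sigma(\mathbf a)\in F_\sigma(\mathbb NA)\}$. *)

theory Defs
  imports "HOL-Analysis.Analysis"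
begin

text \<open>Lattice points of Z^d are modelled as int^'d; the ambient real space is real^'d.\<close>

definition rvec :: "int ^ 'd \<Rightarrow> real ^ 'd" where
  "rvec x = (\<chi> i. real_of_int (x $ i))"

definition real_cone :: "(int ^ 'd) set \<Rightarrow> (real ^ 'd) set" where
  "real_cone A = {\<Sum>a\<in>A. c a *\<^sub>R rvec a | c. \<forall>a\<in>A. c a \<ge> 0}"

definition monoid_of :: "(int ^ 'd) set \<Rightarrow> (int ^ 'd) set" where
  "monoid_of A = {(\<chi> i. \<Sum>a\<in>A. int (n a) * a $ i) | n. True}"

definition int_span :: "(int ^ 'd) set \<Rightarrow> (int ^ 'd) set" where
  "int_span S = {(\<chi> i. \<Sum>a\<in>S. k a * a $ i) | k. True}"

definition rat_span_lattice :: "(int ^ 'd) set \<Rightarrow> (int ^ 'd) set" where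
  "rat_span_lattice S = {x. \<exists>q :: int ^ 'd \<Rightarrow> rat.
      \<forall>i. rat_of_int (x $ i) = (\<Sum>a\<in>S. q a * rat_of_int (a $ i))}"

definition iform :: "int ^ 'd \<Rightarrow> int ^ 'd \<Rightarrow> int" where
  "iform c x = (\<Sum>i\<in>UNIV. c $ i * x $ i)"

definition rform :: "int ^ 'd \<Rightarrow> real ^ 'd \<Rightarrow> real" where
  "rform c y = (\<Sum>i\<in>UNIV. real_of_int (c $ i) * y $ i)"

definition is_facet_form :: "(int ^ 'd) set \<Rightarrow> (real ^ 'd) set \<Rightarrow> int ^ 'd \<Rightarrow> bool" where
  "is_facet_form A \<sigma> c \<longleftrightarrow>
     (\<forall>y\<in>real_cone A. rform c y \<ge> 0) \<and> (\<forall>y\<in>\<sigma>. rform c y = 0) \<and> range (iform c) = UNIV"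

definition facet_form :: "(int ^ 'd) set \<Rightarrow> (real ^ 'd) set \<Rightarrow> int ^ 'd" where
  "facet_form A \<sigma> = (THE c. is_facet_form A \<sigma> c)"

definition scored :: "(int ^ 'd) set \<Rightarrow> bool" where
  "scored A \<longleftrightarrow> monoid_of A =
     {x. \<forall>\<sigma>. \<sigma> facet_of real_cone A \<longrightarrow>
           iform (facet_form A \<sigma>) x \<in> iform (facet_form A \<sigma>) ` monoid_of A}"

end

theory Submission
  imports Defs
begin

(* Write a lattice point x of Q(A \<inter> \<tau>) as x = \<Sum> q_b b over the generators b \<in> A \<inter> \<tau> and put
   s = \<Sum> b.  For large N the point x + N s is a nonnegative combination of these generators, so it
   lies in \<tau>.  For a facet \<sigma> \<supseteq> \<tau> the form F_\<sigma> vanishes there, and 0 = F_\<sigma>(0) is a value on NA.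
   For a facet \<sigma> not containing \<tau> some generator of \<tau> has F_\<sigma>(b) \<ge> 1, so F_\<sigma>(x + N s) grows
   without bound, while F_\<sigma>(NA) contains every large integer: F_\<sigma> is onto Z and nonnegative on A,
   so F_\<sigma>(NA) is a numerical semigroup.  Scoredness puts x + N s into NA, and a point of the face
   \<tau> only involves generators lying in \<tau>; hence x = (x + N s) - N s \<in> Z(A \<inter> \<tau>).
   Most of the work goes into showing that F_\<sigma> is well defined: a facet is spanned by lattice
   points, so by Cramer's rule its normal line contains nonzero lattice points, and exactly one of
   them is primitive and nonnegative on the cone. *)

section \<open>Lattice vectors and integral linear forms\<close>

lemma rvec_component [simp]: "rvec x $ i = real_of_int (x $ i)"
  by (simp add: rvec_def)

lemma rvec_eq_iff [simp]: "rvec x = rvec y \<longleftrightarrow> x = y"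
  by (simp add: vec_eq_iff)

lemma rvec_zero [simp]: "rvec 0 = 0"
  by (simp add: vec_eq_iff)

lemma rvec_add: "rvec (x + y) = rvec x + rvec y"
  by (simp add: vec_eq_iff)

lemma rvec_smult: "rvec (k *s x) = real_of_int k *\<^sub>R rvec x"
  by (simp add: vec_eq_iff)

lemma rvec_sum: "rvec (sum f S) = (\<Sum>a\<in>S. rvec (f a))"
  by (simp add: vec_eq_iff)

lemma rvec_axis: "rvec (axis i 1) = axis i 1"
  by (simp add: vec_eq_iff axis_def)

lemma Basis_subset_range_rvec: "Basis \<subseteq> range rvec"
proof
  fix b :: "real^'d" assume "b \<in> Basis"
  then obtain i where "b = axis i 1" by (auto simp: Basis_vec_def)
  then show "b \<in> range rvec" using rvec_axis[of i] by (metis rangeI)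
qed

lemma rform_eq_inner: "rform c y = rvec c \<bullet> y"
  by (simp add: rform_def inner_vec_def)

lemma of_int_iform: "real_of_int (iform c x) = rvec c \<bullet> rvec x"
  by (simp add: iform_def inner_vec_def)

lemma iform_zero [simp]: "iform c 0 = 0"
  by (simp add: iform_def)

lemma iform_add: "iform c (x + y) = iform c x + iform c y"
  by (simp add: iform_def sum.distrib algebra_simps)

lemma iform_diff: "iform c (x - y) = iform c x - iform c y"
  by (simp add: iform_def sum_subtractf algebra_simps)

lemma iform_smult: "iform c (k *s x) = k * iform c x"
  by (simp add: iform_def sum_distrib_left algebra_simps)

lemma iform_sum: "iform c (sum f S) = (\<Sum>a\<in>S. iform c (f a))"
  by (simp add: iform_def sum_distrib_left sum.swap[of _ UNIV])

lemma iform_scale_form: "iform (k *s c) x = k * iform c x"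
  by (simp add: iform_def sum_distrib_left algebra_simps)

lemma iform_uminus_form: "iform (- c) x = iform c (- x)"
  by (simp add: iform_def)

lemma iform_axis: "iform c (axis i 1) = c $ i"
  using of_int_iform[of c "axis i 1"] by (simp add: rvec_axis inner_axis)

lemma iform_smult_axis: "iform c (t *s axis i 1) = t * c $ i"
  by (simp add: iform_smult iform_axis)

lemma int_span_altdef: "int_span S = {\<Sum>a\<in>S. k a *s a | k. True}"
  by (simp add: int_span_def vec_eq_iff)

lemma monoid_of_altdef: "monoid_of A = {\<Sum>a\<in>A. int (n a) *s a | n. True}"
  by (simp add: monoid_of_def vec_eq_iff)

lemma zero_in_monoid_of: "0 \<in> monoid_of A"
  unfolding monoid_of_altdef by (auto intro!: exI[of _ "\<lambda>_. 0"])

lemma monoid_of_diff_sum_in_int_span: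
  assumes "y \<in> monoid_of B"
  shows "y - int N *s \<Sum>B \<in> int_span B"
proof -
  obtain n where "y = (\<Sum>b\<in>B. int (n b) *s b)"
    using assms unfolding monoid_of_altdef by blast
  then have "y - int N *s \<Sum>B = (\<Sum>b\<in>B. (int (n b) - int N) *s b)"
    by (simp add: vec_eq_iff sum_distrib_left sum_subtractf algebra_simps)
  then show ?thesis
    unfolding int_span_altdef by (auto intro!: exI[of _ "\<lambda>b. int (n b) - int N"])
qed

lemma rat_span_latticeD:
  assumes "x \<in> rat_span_lattice S"
  obtains q :: "int ^ 'd \<Rightarrow> rat" where "rvec x = (\<Sum>a\<in>S. real_of_rat (q a) *\<^sub>R rvec a)"
proof -
  obtain q :: "int ^ 'd \<Rightarrow> rat"
    where q: "\<And>i. rat_of_int (x $ i) = (\<Sum>a\<in>S. q a * rat_of_int (a $ i))"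
    using assms by (auto simp: rat_span_lattice_def)
  have "real_of_int (x $ i) = (\<Sum>a\<in>S. real_of_rat (q a) * real_of_int (a $ i))" for i
    using arg_cong[OF q[of i], of real_of_rat] by (simp add: of_rat_sum of_rat_mult)
  then show ?thesis
    by (intro that[of q]) (simp add: vec_eq_iff)
qed

lemma int_span_subset_rat_span_lattice: "int_span S \<subseteq> rat_span_lattice S"
  by (force simp: int_span_def rat_span_lattice_def)

section \<open>The real cone and its faces\<close>

lemma nonneg_combinations_eq_convex_cone_hull:
  fixes v :: "'a \<Rightarrow> 'b::real_vector"
  assumes "finite A"
  shows "{\<Sum>a\<in>A. c a *\<^sub>R v a | c. \<forall>a\<in>A. 0 \<le> c a} = convex_cone hull (v ` A)"
    (is "?C = _")
proof (rule hull_unique[symmetric])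
  show "v ` A \<subseteq> ?C"
  proof (rule image_subsetI)
    fix b assume "b \<in> A"
    have "(\<Sum>a\<in>A. (if a = b then 1 else 0) *\<^sub>R v a) = (\<Sum>a\<in>A. if a = b then v a else 0)"
      by (rule sum.cong) auto
    with \<open>b \<in> A\<close> have "v b = (\<Sum>a\<in>A. (if a = b then 1 else 0) *\<^sub>R v a)"
      using assms by simp
    then show "v b \<in> ?C" by force
  qed
  show "convex_cone ?C"
    unfolding convex_cone_iff
  proof (intro conjI ballI allI impI)
    show "0 \<in> ?C" by (force intro: exI[of _ "\<lambda>_. 0"])
  next
    fix x y assume "x \<in> ?C" "y \<in> ?C"
    then obtain c d where "\<forall>a\<in>A. 0 \<le> c a" "\<forall>a\<in>A. 0 \<le> d a"
      and "x = (\<Sum>a\<in>A. c a *\<^sub>R v a)" "y = (\<Sum>a\<in>A. d a *\<^sub>R v a)" by blast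
    then show "x + y \<in> ?C"
      by (intro CollectI exI[of _ "\<lambda>a. c a + d a"]) (simp add: sum.distrib scaleR_add_left)
  next
    fix x and t :: real assume "x \<in> ?C" "0 \<le> t"
    then obtain c where "\<forall>a\<in>A. 0 \<le> c a" "x = (\<Sum>a\<in>A. c a *\<^sub>R v a)" by blast
    with \<open>0 \<le> t\<close> show "t *\<^sub>R x \<in> ?C"
      by (intro CollectI exI[of _ "\<lambda>a. t * c a"]) (simp add: scaleR_sum_right)
  qed
  fix T assume T: "v ` A \<subseteq> T" "convex_cone T"
  have "(\<Sum>a\<in>F. c a *\<^sub>R v a) \<in> T" if "F \<subseteq> A" "\<forall>a\<in>A. 0 \<le> c a" for F c
    using finite_subset[OF that(1) assms] that(1)
  proof (induction F rule: finite_induct)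
    case (insert a F)
    then have "c a *\<^sub>R v a \<in> T" using T that(2) by (auto intro: convex_cone_scaleR)
    with insert show ?case using T(2) by (simp add: convex_cone_add)
  qed (simp add: T(2) convex_cone_contains_0)
  then show "?C \<subseteq> T" by blast
qed

lemma real_cone_eq_convex_cone_hull: "finite A \<Longrightarrow> real_cone A = convex_cone hull (rvec ` A)"
  by (simp add: real_cone_def nonneg_combinations_eq_convex_cone_hull)

lemma polyhedron_real_cone: "finite A \<Longrightarrow> polyhedron (real_cone A)"
  by (simp add: real_cone_eq_convex_cone_hull polyhedron_convex_cone_hull)

lemma conic_real_cone: "finite A \<Longrightarrow> conic (real_cone A)"
  by (simp add: real_cone_eq_convex_cone_hull conic_convex_cone_hull)

lemma zero_in_real_cone: "finite A \<Longrightarrow> 0 \<in> real_cone A"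
  by (simp add: real_cone_eq_convex_cone_hull convex_cone_hull_contains_0)

lemma rvec_in_real_cone: "finite A \<Longrightarrow> a \<in> A \<Longrightarrow> rvec a \<in> real_cone A"
  by (simp add: real_cone_eq_convex_cone_hull hull_inc)

lemma real_cone_mono: "finite A \<Longrightarrow> B \<subseteq> A \<Longrightarrow> real_cone B \<subseteq> real_cone A"
  by (simp add: real_cone_eq_convex_cone_hull finite_subset hull_mono image_mono)

lemma facets_finite: "finite A \<Longrightarrow> finite {\<sigma>. \<sigma> facet_of real_cone A}"
  using finite_polyhedron_faces[OF polyhedron_real_cone]
  by (rule finite_subset[rotated]) (auto simp: facet_of_def)

lemma face_of_polyhedral_cone_exposed:
  fixes K :: "'a::euclidean_space set"
  assumes "polyhedron K" "conic K" "F face_of K" "F \<noteq> {}"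
  obtains u where "\<forall>y\<in>K. u \<bullet> y \<le> 0" "F = {y\<in>K. u \<bullet> y = 0}"
proof -
  have "F exposed_face_of K" using assms(1,3) exposed_face_of_polyhedron by blast
  then obtain u b where K: "K \<subseteq> {y. u \<bullet> y \<le> b}" and F: "F = K \<inter> {y. u \<bullet> y = b}"
    unfolding exposed_face_of_def by blast
  obtain z where "z \<in> F" using assms(4) by blast
  then have "z \<in> K" "u \<bullet> z = b" using F by auto
  moreover have "2 *\<^sub>R z \<in> K" "0 \<in> K"
    using \<open>z \<in> K\<close> assms(2) by (auto simp: conic_mul conic_contains_0)
  ultimately have "u \<bullet> (2 *\<^sub>R z) \<le> u \<bullet> z" "u \<bullet> 0 \<le> u \<bullet> z" using K by auto
  then have "b = 0" using \<open>u \<bullet> z = b\<close> by simp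
  with K F show ?thesis by (intro that) auto
qed

lemma face_of_real_cone_exposed:
  assumes "finite A" "\<tau> face_of real_cone A" "\<tau> \<noteq> {}"
  obtains u where "\<forall>y\<in>real_cone A. u \<bullet> y \<le> 0" "\<tau> = {y\<in>real_cone A. u \<bullet> y = 0}"
  using face_of_polyhedral_cone_exposed polyhedron_real_cone conic_real_cone assms by metis

lemma face_of_real_cone_support:
  assumes "finite A" "\<tau> face_of real_cone A" "\<forall>a\<in>A. 0 \<le> c a"
    and "(\<Sum>a\<in>A. c a *\<^sub>R rvec a) \<in> \<tau>" "b \<in> A" "0 < c b"
  shows "rvec b \<in> \<tau>"
proof -
  obtain u where u: "\<forall>y\<in>real_cone A. u \<bullet> y \<le> 0" "\<tau> = {y\<in>real_cone A. u \<bullet> y = 0}"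
    using face_of_real_cone_exposed assms(1,2,4) by blast
  have nonneg: "0 \<le> c a * - (u \<bullet> rvec a)" if "a \<in> A" for a
  proof -
    have "u \<bullet> rvec a \<le> 0" using u(1) rvec_in_real_cone[OF assms(1) that] by blast
    with that assms(3) show ?thesis by (simp add: mult_nonneg_nonpos)
  qed
  have "(\<Sum>a\<in>A. c a * - (u \<bullet> rvec a)) = 0"
    using assms(4) u(2) by (simp add: inner_sum_right sum_negf)
  then have "c b * (u \<bullet> rvec b) = 0"
    using sum_nonneg_eq_0_iff[OF assms(1) nonneg] assms(5) by simp
  then show ?thesis
    using u(2) assms(1,5,6) rvec_in_real_cone by simp
qed

lemma face_of_real_cone_eq:
  assumes "finite A" "\<tau> face_of real_cone A" "\<tau> \<noteq> {}"
  shows "\<tau> = real_cone {a\<in>A. rvec a \<in> \<tau>}"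
proof
  obtain u where u: "\<forall>y\<in>real_cone A. u \<bullet> y \<le> 0" "\<tau> = {y\<in>real_cone A. u \<bullet> y = 0}"
    using face_of_real_cone_exposed assms by blast
  show "real_cone {a\<in>A. rvec a \<in> \<tau>} \<subseteq> \<tau>"
  proof
    fix y assume y: "y \<in> real_cone {a\<in>A. rvec a \<in> \<tau>}"
    then obtain c where c: "y = (\<Sum>a\<in>{a\<in>A. rvec a \<in> \<tau>}. c a *\<^sub>R rvec a)"
      unfolding real_cone_def by blast
    have "u \<bullet> rvec a = 0" if "rvec a \<in> \<tau>" for a
      using that by (simp add: u(2))
    then have "u \<bullet> y = 0"
      unfolding c inner_sum_right by (intro sum.neutral) simp
    moreover have "y \<in> real_cone A"
      using y real_cone_mono[OF assms(1), of "{a\<in>A. rvec a \<in> \<tau>}"] by auto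
    ultimately show "y \<in> \<tau>" by (simp add: u(2))
  qed
next
  show "\<tau> \<subseteq> real_cone {a\<in>A. rvec a \<in> \<tau>}"
  proof
    fix y assume "y \<in> \<tau>"
    then have "y \<in> real_cone A" using assms(2) face_of_imp_subset by blast
    then obtain c where c: "\<forall>a\<in>A. 0 \<le> c a" "y = (\<Sum>a\<in>A. c a *\<^sub>R rvec a)"
      unfolding real_cone_def by blast
    have "c a = 0" if "a \<in> A" "rvec a \<notin> \<tau>" for a
      using face_of_real_cone_support[OF assms(1,2) c(1)] c that \<open>y \<in> \<tau>\<close>
      by (metis order_less_le)
    then have "y = (\<Sum>a\<in>{a\<in>A. rvec a \<in> \<tau>}. c a *\<^sub>R rvec a)"
      unfolding c(2) by (intro sum.mono_neutral_right[OF assms(1)]) auto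
    then show "y \<in> real_cone {a\<in>A. rvec a \<in> \<tau>}"
      using c(1) unfolding real_cone_def by blast
  qed
qed

lemma monoid_of_face:
  assumes "finite A" "\<tau> face_of real_cone A" "y \<in> monoid_of A" "rvec y \<in> \<tau>"
  shows "y \<in> monoid_of {a\<in>A. rvec a \<in> \<tau>}"
proof -
  obtain n where n: "y = (\<Sum>a\<in>A. int (n a) *s a)"
    using assms(3) unfolding monoid_of_altdef by blast
  then have ry: "rvec y = (\<Sum>a\<in>A. real (n a) *\<^sub>R rvec a)"
    by (simp add: rvec_sum rvec_smult)
  have "n a = 0" if "a \<in> A" "rvec a \<notin> \<tau>" for a
  proof (rule ccontr)
    assume "n a \<noteq> 0"
    then have "rvec a \<in> \<tau>"
      using face_of_real_cone_support[OF assms(1,2) _ _ that(1), of "\<lambda>a. real (n a)"] assms(4) ry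
      by simp
    with that(2) show False ..
  qed
  then have "y = (\<Sum>a\<in>{a\<in>A. rvec a \<in> \<tau>}. int (n a) *s a)"
    unfolding n by (intro sum.mono_neutral_right[OF assms(1)]) auto
  then show ?thesis unfolding monoid_of_altdef by blast
qed

section \<open>Facet normals\<close>

lemma span_rvec_eq_UNIV:
  assumes "int_span A = UNIV"
  shows "span (rvec ` A) = UNIV"
proof -
  have "axis i 1 \<in> span (rvec ` A)" for i
  proof -
    have "axis i (1::int) \<in> int_span A" using assms by simp
    then obtain k where "axis i 1 = (\<Sum>a\<in>A. k a *s a)"
      unfolding int_span_altdef by blast
    then have "rvec (axis i 1) = rvec (\<Sum>a\<in>A. k a *s a)" by simp
    then have "axis i 1 = (\<Sum>a\<in>A. real_of_int (k a) *\<^sub>R rvec a)"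
      by (simp add: rvec_axis rvec_sum rvec_smult)
    then show ?thesis by (simp add: span_sum span_mul span_base)
  qed
  then have "span Basis \<subseteq> span (rvec ` A)"
    by (intro span_minimal) (auto simp: Basis_vec_def)
  then show ?thesis by (simp add: span_Basis top.extremum_unique)
qed

lemma span_real_cone:
  assumes "finite A" "int_span A = UNIV"
  shows "span (real_cone A) = UNIV"
proof -
  have "rvec ` A \<subseteq> real_cone A" using rvec_in_real_cone[OF assms(1)] by blast
  then show ?thesis
    using span_mono span_rvec_eq_UNIV[OF assms(2)] by (metis top.extremum_unique)
qed

lemma span_facet_of_cone:
  fixes K :: "'a::euclidean_space set"
  assumes "span K = UNIV" "0 \<in> K" "\<sigma> facet_of K" "\<sigma> = {y\<in>K. u \<bullet> y = 0}"
  shows "u \<noteq> 0" and "span \<sigma> = {x. u \<bullet> x = 0}"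
proof -
  have "aff_dim K = int (dim K)" by (rule aff_dim_zero[OF hull_inc[OF assms(2)]])
  also have "dim K = DIM('a)" using dim_span[of K] assms(1) by simp
  finally have aff_dim_K: "aff_dim K = int DIM('a)" .
  then have aff_dim_\<sigma>: "aff_dim \<sigma> = int DIM('a) - 1"
    using assms(3) by (simp add: facet_of_def)
  show "u \<noteq> 0"
  proof
    assume "u = 0"
    then have "\<sigma> = K" using assms(4) by simp
    with aff_dim_\<sigma> aff_dim_K show False by simp
  qed
  have "0 \<in> \<sigma>" using assms(2,4) by simp
  then have "aff_dim \<sigma> = int (dim \<sigma>)" by (rule aff_dim_zero[OF hull_inc])
  with aff_dim_\<sigma> have "dim (span \<sigma>) = dim {x. u \<bullet> x = 0}"
    using dim_hyperplane[OF \<open>u \<noteq> 0\<close>] DIM_positive[where 'a='a] by simp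
  moreover have "span \<sigma> \<subseteq> {x. u \<bullet> x = 0}"
    using assms(4) by (intro span_minimal) (auto simp: subspace_hyperplane)
  ultimately show "span \<sigma> = {x. u \<bullet> x = 0}"
    by (intro subspace_dim_equal subspace_span subspace_hyperplane) simp_all
qed

lemma orthogonal_to_hyperplane_span:
  fixes u v :: "'a::real_inner"
  assumes "span S = {x. u \<bullet> x = 0}" "\<forall>y\<in>S. v \<bullet> y = 0"
  shows "v = (v \<bullet> u / (u \<bullet> u)) *\<^sub>R u"
proof -
  define w where "w = v - (v \<bullet> u / (u \<bullet> u)) *\<^sub>R u"
  have "u \<bullet> w = 0"
    by (cases "u = 0") (simp_all add: w_def inner_diff_right inner_commute)
  then have "w \<in> span S" using assms(1) by simp
  moreover have "span S \<subseteq> {x. v \<bullet> x = 0}"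
    using assms(2) by (intro span_minimal) (auto simp: subspace_hyperplane)
  ultimately have "v \<bullet> w = 0" by auto
  with \<open>u \<bullet> w = 0\<close> have "w \<bullet> w = 0"
    by (simp add: w_def inner_diff_left inner_commute)
  then show ?thesis by (simp add: w_def)
qed

lemma facet_of_real_cone_exposed:
  assumes "finite A" "int_span A = UNIV" "\<sigma> facet_of real_cone A"
  obtains u y0 where "\<forall>y\<in>real_cone A. u \<bullet> y \<le> 0" "\<sigma> = {y\<in>real_cone A. u \<bullet> y = 0}"
    "span \<sigma> = {x. u \<bullet> x = 0}" "y0 \<in> real_cone A" "u \<bullet> y0 < 0"
proof -
  have "\<sigma> face_of real_cone A" "\<sigma> \<noteq> {}" using assms(3) by (auto simp: facet_of_def)
  then obtain u where u: "\<forall>y\<in>real_cone A. u \<bullet> y \<le> 0" "\<sigma> = {y\<in>real_cone A. u \<bullet> y = 0}"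
    by (rule face_of_real_cone_exposed[OF assms(1)])
  note span_\<sigma> = span_facet_of_cone[OF span_real_cone[OF assms(1,2)] zero_in_real_cone[OF assms(1)]
      assms(3) u(2)]
  have "\<exists>y0\<in>real_cone A. u \<bullet> y0 < 0"
  proof (rule ccontr)
    assume "\<not> ?thesis"
    then have "real_cone A \<subseteq> {x. u \<bullet> x = 0}" using u(1) by force
    then have "span (real_cone A) \<subseteq> {x. u \<bullet> x = 0}"
      by (intro span_minimal) (auto simp: subspace_hyperplane)
    then have "u \<in> {x. u \<bullet> x = 0}" using span_real_cone[OF assms(1,2)] by (metis UNIV_I subsetD)
    with span_\<sigma>(1) show False by simp
  qed
  with u span_\<sigma>(2) show ?thesis using that by blast
qed

lemma det_integer_matrix:
  fixes M :: "real^'n^'n"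
  assumes "\<And>i j. M $ i $ j \<in> \<int>"
  shows "det M \<in> \<int>"
  unfolding det_def by (intro Ints_sum Ints_mult Ints_prod assms) (simp add: Ints_of_int)

lemma integer_cramer:
  fixes M :: "real^'n^'n" and b :: "int^'n"
  assumes "det M \<noteq> 0" "\<And>i j. M $ i $ j \<in> \<int>"
  obtains C where "M *v rvec C = det M *\<^sub>R rvec b"
proof -
  define D where "D = (\<chi> k. det (\<chi> i j. if j = k then rvec b $ i else M $ i $ j))"
  have "M *v (\<chi> k. D $ k / det M) = rvec b"
    unfolding D_def by (subst cramer[OF assms(1)]) simp
  moreover have "(\<chi> k. D $ k / det M) = (1 / det M) *\<^sub>R D"
    by (simp add: vec_eq_iff)
  ultimately have "det M *\<^sub>R ((1 / det M) *\<^sub>R (M *v D)) = det M *\<^sub>R rvec b"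
    by (simp add: matrix_vector_mult_scaleR)
  then have MD: "M *v D = det M *\<^sub>R rvec b"
    using assms(1) by simp
  have "D $ k \<in> \<int>" for k
    unfolding D_def by (simp add: det_integer_matrix assms(2))
  then have "D = rvec (\<chi> k. \<lfloor>D $ k\<rfloor>)"
    by (simp add: vec_eq_iff)
  then have "M *v rvec (\<chi> k. \<lfloor>D $ k\<rfloor>) = det M *\<^sub>R rvec b"
    using MD by metis
  then show ?thesis by (rule that)
qed

lemma integer_dual_basis_vector:
  fixes B :: "(real^'d) set"
  assumes "B \<subseteq> range rvec" "independent B" "span B = UNIV" "w \<in> B"
  obtains C where "rvec C \<bullet> w \<noteq> 0" "\<And>v. v \<in> B \<Longrightarrow> v \<noteq> w \<Longrightarrow> rvec C \<bullet> v = 0"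
proof -
  have "card B = CARD('d)"
    using dim_eq_card_independent[OF assms(2)] dim_span[of B] assms(3) by simp
  then obtain g where g: "bij_betw g (UNIV :: 'd set) B"
    using finite_same_card_bij[of "UNIV :: 'd set" B] finiteI_independent[OF assms(2)] by auto
  then obtain i0 where "g i0 = w" using assms(4) by (metis bij_betw_imp_surj_on imageE)
  define M :: "real^'d^'d" where "M = (\<chi> i. g i)"
  have "rows M = B"
    using g by (auto simp: rows_def row_def M_def vec_lambda_eta bij_betw_def)
  then have "det M \<noteq> 0"
    using assms(3) matrix_left_invertible_span_rows invertible_left_inverse invertible_det_nz
    by metis
  moreover have "M $ i $ j \<in> \<int>" for i j
  proof -
    have "g i \<in> range rvec" using g assms(1) by (auto simp: bij_betw_def)
    then show ?thesis by (auto simp: M_def)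
  qed
  ultimately obtain C where C: "M *v rvec C = det M *\<^sub>R rvec (axis i0 1)"
    using integer_cramer by blast
  have gC: "rvec C \<bullet> g i = (if i = i0 then det M else 0)" for i
    using arg_cong[OF C, of "\<lambda>v. v $ i"]
    by (simp add: matrix_vector_mul_component M_def inner_commute axis_def)
  show ?thesis
  proof (rule that)
    show "rvec C \<bullet> w \<noteq> 0" using gC[of i0] \<open>g i0 = w\<close> \<open>det M \<noteq> 0\<close> by simp
    fix v assume "v \<in> B" "v \<noteq> w"
    then obtain i where "v = g i" "i \<noteq> i0"
      using g \<open>g i0 = w\<close> by (metis bij_betw_imp_surj_on imageE)
    then show "rvec C \<bullet> v = 0" using gC by simp
  qed
qed

text \<open>Complete a basis of the subspace by standard unit vectors; the normal is a dual basis vector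
  of the completed basis, which Cramer's rule makes integral.\<close>

lemma integer_normal_exists:
  fixes S :: "(int^'d) set"
  assumes "span (rvec ` S) \<noteq> UNIV"
  obtains C where "C \<noteq> 0" "\<And>a. a \<in> S \<Longrightarrow> iform C a = 0"
proof -
  obtain S0 where S0: "S0 \<subseteq> rvec ` S" "independent S0" "rvec ` S \<subseteq> span S0"
    by (rule maximal_independent_subset)
  obtain B where B: "S0 \<subseteq> B" "B \<subseteq> S0 \<union> Basis" "independent B" "S0 \<union> Basis \<subseteq> span B"
    using maximal_independent_subset_extend[OF _ S0(2), of "S0 \<union> Basis"] by blast
  have "span Basis \<subseteq> span B"
    using B(4) by (intro span_minimal subspace_span) auto
  then have "span B = UNIV" by (simp add: span_Basis top.extremum_unique)
  have "\<not> B \<subseteq> span S0"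
  proof
    assume "B \<subseteq> span S0"
    then have "span (rvec ` S) = UNIV"
      using span_mono[OF S0(1)] span_minimal[of B "span S0"] \<open>span B = UNIV\<close> by auto
    with assms show False ..
  qed
  then obtain w where w: "w \<in> B" "w \<notin> span S0" by blast
  have "B \<subseteq> range rvec" using B(2) S0(1) Basis_subset_range_rvec by blast
  then obtain C where C: "rvec C \<bullet> w \<noteq> 0" "\<And>v. v \<in> B \<Longrightarrow> v \<noteq> w \<Longrightarrow> rvec C \<bullet> v = 0"
    using integer_dual_basis_vector[OF _ B(3) \<open>span B = UNIV\<close> w(1)] by blast
  show ?thesis
  proof
    show "C \<noteq> 0" using C(1) by auto
    have "S0 \<subseteq> {x. rvec C \<bullet> x = 0}"
      using C(2) B(1) w(2) span_base by blast
    then have "span S0 \<subseteq> {x. rvec C \<bullet> x = 0}"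
      by (intro span_minimal) (auto simp: subspace_hyperplane)
    then have "rvec C \<bullet> rvec a = 0" if "a \<in> S" for a
      using S0(3) that by blast
    then show "iform C a = 0" if "a \<in> S" for a
      using that of_int_iform[of C a] by simp
  qed
qed

lemma integer_multiple_of_face_normal:
  assumes "finite A" "\<sigma> face_of real_cone A" "\<sigma> \<noteq> {}" "span \<sigma> = {x. u \<bullet> x = 0}" "u \<noteq> 0"
  obtains C l where "C \<noteq> 0" "l \<noteq> 0" "rvec C = l *\<^sub>R u"
proof -
  define B where "B = {a\<in>A. rvec a \<in> \<sigma>}"
  have "span (rvec ` B) \<subseteq> span \<sigma>" by (intro span_mono) (auto simp: B_def)
  moreover have "u \<notin> span \<sigma>" using assms(4,5) by simp
  ultimately have "span (rvec ` B) \<noteq> UNIV" by auto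
  then obtain C where "C \<noteq> 0" and C: "\<And>a. a \<in> B \<Longrightarrow> iform C a = 0"
    by (rule integer_normal_exists) blast
  have "\<sigma> = real_cone B" using face_of_real_cone_eq[OF assms(1-3)] by (simp add: B_def)
  also have "\<dots> = convex_cone hull (rvec ` B)"
    by (rule real_cone_eq_convex_cone_hull) (simp add: B_def assms(1))
  also have "\<dots> \<subseteq> span (rvec ` B)" by (intro hull_minimal span_superset convex_cone_span)
  also have "\<dots> \<subseteq> {x. rvec C \<bullet> x = 0}"
    using C by (intro span_minimal) (auto simp: subspace_hyperplane of_int_iform[symmetric])
  finally have "\<forall>y\<in>\<sigma>. rvec C \<bullet> y = 0" by blast
  with assms(4) have C_u: "rvec C = (rvec C \<bullet> u / (u \<bullet> u)) *\<^sub>R u"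
    by (rule orthogonal_to_hyperplane_span)
  moreover from C_u \<open>C \<noteq> 0\<close> have "rvec C \<bullet> u / (u \<bullet> u) \<noteq> 0"
    by (metis rvec_eq_iff rvec_zero scale_zero_left)
  ultimately show ?thesis using \<open>C \<noteq> 0\<close> that by blast
qed

section \<open>Primitive facet forms\<close>

text \<open>The values of an integral form are the multiples of its least positive value.\<close>

lemma primitive_factorization:
  assumes "C \<noteq> 0"
  obtains g c where "0 < g" "C = g *s c" "surj (iform c)"
proof -
  define P where "P n \<longleftrightarrow> 0 < n \<and> int n \<in> range (iform C)" for n
  obtain k where "C $ k \<noteq> 0" using assms by (auto simp: vec_eq_iff)
  moreover have "iform C (sgn (C $ k) *s axis k 1) = \<bar>C $ k\<bar>"
    by (simp add: iform_smult_axis abs_if sgn_if)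
  ultimately have "P (nat \<bar>C $ k\<bar>)"
    unfolding P_def by (metis rangeI zero_less_abs_iff zero_less_nat_eq abs_ge_zero int_nat_eq)
  define g where "g = (LEAST n. P n)"
  have "P g" unfolding g_def by (rule LeastI) fact
  then obtain x0 where "0 < g" and x0: "iform C x0 = int g" by (auto simp: P_def)
  have dvd: "int g dvd iform C x" for x
  proof -
    define r where "r = iform C x mod int g"
    have r: "iform C (x - (iform C x div int g) *s x0) = r"
      by (simp add: iform_diff iform_smult x0 r_def minus_div_mult_eq_mod)
    have "0 \<le> r" "r < int g" using \<open>0 < g\<close> by (simp_all add: r_def)
    have "r = 0"
    proof (rule ccontr)
      assume "r \<noteq> 0"
      have "r \<in> range (iform C)" using r by (metis rangeI)
      with \<open>r \<noteq> 0\<close> \<open>0 \<le> r\<close> have "P (nat r)" by (simp add: P_def)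
      then have "g \<le> nat r" unfolding g_def by (rule Least_le)
      with \<open>0 \<le> r\<close> \<open>r < int g\<close> show False by (simp add: le_nat_iff)
    qed
    then show ?thesis by (simp add: r_def dvd_eq_mod_eq_0)
  qed
  define c where "c = (\<chi> i. C $ i div int g)"
  have "int g dvd C $ i" for i using dvd[of "axis i 1"] by (simp add: iform_axis)
  then have "C = int g *s c" by (simp add: c_def vec_eq_iff)
  moreover have "iform c x0 = 1"
    using x0 \<open>0 < g\<close> by (simp add: \<open>C = int g *s c\<close> iform_scale_form)
  then have "surj (iform c)"
    by (intro surjI[of _ "\<lambda>n. n *s x0"]) (simp add: iform_smult)
  ultimately show ?thesis using \<open>0 < g\<close> by (intro that) auto
qed

lemma surj_iform_imp_nonzero:
  assumes "surj (iform c)"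
  shows "c \<noteq> 0"
proof
  assume "c = 0"
  obtain x where "iform c x = 1" using assms by (metis surjD)
  with \<open>c = 0\<close> show False by (simp add: iform_def)
qed

lemma surj_iform_uminus:
  assumes "surj (iform c)"
  shows "surj (iform (- c))"
proof -
  have "n \<in> range (iform (- c))" for n
  proof -
    obtain x where "iform c x = n" using assms by (metis surjD)
    then have "iform (- c) (- x) = n" by (simp add: iform_uminus_form)
    then show ?thesis by (metis rangeI)
  qed
  then show ?thesis by blast
qed

lemma surj_iform_eq_if_positive_multiple:
  assumes "surj (iform c1)" "surj (iform c2)" "0 < l" "rvec c1 = l *\<^sub>R rvec c2"
  shows "c1 = c2"
proof -
  have val: "real_of_int (iform c1 x) = l * real_of_int (iform c2 x)" for x
    by (simp add: of_int_iform assms(4))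
  obtain x1 x2 where x1: "iform c1 x1 = 1" and x2: "iform c2 x2 = 1"
    using assms(1,2) by (metis surjD)
  have "real_of_int (iform c1 x2 * iform c2 x1) = 1"
    using val[of x1] val[of x2] x1 x2 by simp
  then have "iform c1 x2 * iform c2 x1 = 1" by linarith
  moreover have "0 < iform c1 x2" using val[of x2] x2 assms(3) by simp
  ultimately have "l = 1" using val[of x2] x2 pos_zmult_eq_1_iff by force
  then show ?thesis using assms(4) by simp
qed

lemma is_facet_form_negative_multiple:
  assumes "span \<sigma> = {x. u \<bullet> x = 0}" "y0 \<in> real_cone A" "u \<bullet> y0 < 0" "is_facet_form A \<sigma> c"
  obtains \<mu> where "\<mu> < 0" "rvec c = \<mu> *\<^sub>R u"
proof -
  have c: "\<forall>y\<in>real_cone A. 0 \<le> rvec c \<bullet> y" "\<forall>y\<in>\<sigma>. rvec c \<bullet> y = 0" "surj (iform c)"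
    using assms(4) by (auto simp: is_facet_form_def rform_eq_inner)
  define \<mu> where "\<mu> = rvec c \<bullet> u / (u \<bullet> u)"
  have eq: "rvec c = \<mu> *\<^sub>R u"
    unfolding \<mu>_def by (rule orthogonal_to_hyperplane_span[OF assms(1) c(2)])
  have "\<mu> \<noteq> 0"
    using eq surj_iform_imp_nonzero[OF c(3)] by (metis rvec_eq_iff rvec_zero scale_zero_left)
  moreover have "0 \<le> \<mu> * (u \<bullet> y0)" using c(1) assms(2) eq by fastforce
  ultimately have "\<mu> < 0" using assms(3) by (simp add: zero_le_mult_iff)
  then show ?thesis using eq by (rule that)
qed

lemma is_facet_form_if_negative_multiple:
  assumes "\<forall>y\<in>real_cone A. u \<bullet> y \<le> 0" "\<sigma> = {y\<in>real_cone A. u \<bullet> y = 0}"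
    and "\<mu> < 0" "rvec c = \<mu> *\<^sub>R u" "surj (iform c)"
  shows "is_facet_form A \<sigma> c"
  unfolding is_facet_form_def rform_eq_inner assms(4)
proof (intro conjI ballI)
  fix y assume "y \<in> real_cone A"
  then show "0 \<le> \<mu> *\<^sub>R u \<bullet> y" using assms(1,3) by (simp add: mult_nonpos_nonpos)
next
  fix y assume "y \<in> \<sigma>"
  then show "\<mu> *\<^sub>R u \<bullet> y = 0" using assms(2) by simp
qed (fact assms(5))

lemma is_facet_form_exists:
  assumes "finite A" "\<sigma> face_of real_cone A" "\<sigma> \<noteq> {}"
    and u: "\<forall>y\<in>real_cone A. u \<bullet> y \<le> 0" "\<sigma> = {y\<in>real_cone A. u \<bullet> y = 0}"
      "span \<sigma> = {x. u \<bullet> x = 0}" "u \<noteq> 0"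
  obtains c where "is_facet_form A \<sigma> c"
proof -
  obtain C l where "C \<noteq> 0" "l \<noteq> 0" "rvec C = l *\<^sub>R u"
    by (rule integer_multiple_of_face_normal[OF assms(1-3) u(3,4)])
  obtain g c where "0 < g" "C = g *s c" "surj (iform c)"
    by (rule primitive_factorization[OF \<open>C \<noteq> 0\<close>])
  then have "real_of_int g *\<^sub>R rvec c = l *\<^sub>R u" using \<open>rvec C = l *\<^sub>R u\<close> by (simp add: rvec_smult)
  moreover have "rvec c = (1 / real_of_int g) *\<^sub>R (real_of_int g *\<^sub>R rvec c)"
    using \<open>0 < g\<close> by simp
  ultimately have c_u: "rvec c = (l / g) *\<^sub>R u" by simp
  show ?thesis
  proof (cases "l < 0")
    case True
    then show ?thesis
      using is_facet_form_if_negative_multiple[OF u(1,2) _ c_u \<open>surj (iform c)\<close>] \<open>0 < g\<close> that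
      by (simp add: divide_neg_pos)
  next
    case False
    then have "- (l / g) < 0" using \<open>l \<noteq> 0\<close> \<open>0 < g\<close> by simp
    moreover have "rvec (- c) = - (l / g) *\<^sub>R u" using c_u by (simp add: vec_eq_iff)
    ultimately show ?thesis
      using is_facet_form_if_negative_multiple[OF u(1,2)] surj_iform_uminus[OF \<open>surj (iform c)\<close>] that
      by blast
  qed
qed

lemma facet_form:
  assumes "finite A" "int_span A = UNIV" "\<sigma> facet_of real_cone A"
  shows "is_facet_form A \<sigma> (facet_form A \<sigma>)"
    and "\<sigma> = {y\<in>real_cone A. rform (facet_form A \<sigma>) y = 0}"
proof -
  obtain u y0 where u: "\<forall>y\<in>real_cone A. u \<bullet> y \<le> 0" "\<sigma> = {y\<in>real_cone A. u \<bullet> y = 0}"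
    "span \<sigma> = {x. u \<bullet> x = 0}" "y0 \<in> real_cone A" "u \<bullet> y0 < 0"
    by (rule facet_of_real_cone_exposed[OF assms])
  note multiple = is_facet_form_negative_multiple[OF u(3-5)]
  have "\<sigma> face_of real_cone A" "\<sigma> \<noteq> {}" "u \<noteq> 0"
    using assms(3) u(5) by (auto simp: facet_of_def)
  then obtain c0 where c0: "is_facet_form A \<sigma> c0"
    using is_facet_form_exists[OF assms(1) _ _ u(1-3)] by blast
  have "c = c0" if c: "is_facet_form A \<sigma> c" for c
  proof -
    obtain \<mu> where "\<mu> < 0" "rvec c = \<mu> *\<^sub>R u" by (rule multiple[OF c])
    moreover obtain \<mu>0 where "\<mu>0 < 0" "rvec c0 = \<mu>0 *\<^sub>R u" by (rule multiple[OF c0])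
    ultimately have "rvec c = (\<mu> / \<mu>0) *\<^sub>R rvec c0" "0 < \<mu> / \<mu>0"
      by (simp_all add: divide_neg_neg)
    moreover have "surj (iform c)" "surj (iform c0)"
      using c c0 by (simp_all add: is_facet_form_def)
    ultimately show "c = c0" using surj_iform_eq_if_positive_multiple by blast
  qed
  with c0 show form: "is_facet_form A \<sigma> (facet_form A \<sigma>)"
    unfolding facet_form_def by (rule theI)
  obtain \<mu> where "\<mu> < 0" "rvec (facet_form A \<sigma>) = \<mu> *\<^sub>R u" by (rule multiple[OF form])
  then have "rform (facet_form A \<sigma>) y = 0 \<longleftrightarrow> u \<bullet> y = 0" for y
    by (simp add: rform_eq_inner)
  then show "\<sigma> = {y\<in>real_cone A. rform (facet_form A \<sigma>) y = 0}"
    by (simp add: u(2))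
qed

lemma facet_form_nonneg:
  assumes "finite A" "int_span A = UNIV" "\<sigma> facet_of real_cone A" "a \<in> A"
  shows "0 \<le> iform (facet_form A \<sigma>) a"
proof -
  have "0 \<le> rform (facet_form A \<sigma>) (rvec a)"
    using facet_form(1)[OF assms(1-3)] rvec_in_real_cone[OF assms(1,4)]
    unfolding is_facet_form_def by blast
  then show ?thesis by (simp add: rform_eq_inner of_int_iform[symmetric])
qed

section \<open>Values of facet forms on the monoid\<close>

lemma nonneg_combination_of_consecutive:
  fixes Q n :: int
  assumes "0 \<le> Q" "Q * Q \<le> n"
  obtains \<alpha> \<beta> where "0 \<le> \<alpha>" "0 \<le> \<beta>" "n = \<alpha> * Q + \<beta> * (Q + 1)"
proof (cases "Q = 0")
  case True
  then show ?thesis using assms by (intro that[of 0 n]) auto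
next
  case False
  with assms(1) have "0 < Q" by simp
  define q r where "q = n div Q" and "r = n mod Q"
  have n: "n = q * Q + r" and "0 \<le> r" "r < Q"
    using \<open>0 < Q\<close> by (simp_all add: q_def r_def)
  have "Q \<le> q"
  proof (rule ccontr)
    assume "\<not> Q \<le> q"
    then have "q * Q \<le> (Q - 1) * Q" using \<open>0 < Q\<close> by (intro mult_right_mono) auto
    with assms(2) n \<open>r < Q\<close> show False by (simp add: algebra_simps)
  qed
  with n \<open>0 \<le> r\<close> \<open>r < Q\<close> show ?thesis
    by (intro that[of "q - r" r]) (simp_all add: algebra_simps)
qed

text \<open>Surjectivity gives \<open>1 = P - Q\<close> with \<open>P, Q\<close> values on the monoid.\<close>

lemma eventually_in_iform_monoid:
  assumes "surj (iform c)" "int_span A = UNIV" "\<forall>a\<in>A. 0 \<le> iform c a"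
  shows "\<forall>\<^sub>F n in at_top. n \<in> iform c ` monoid_of A"
proof -
  obtain z where "iform c z = 1" using assms(1) by (metis surjD)
  moreover obtain k where "z = (\<Sum>a\<in>A. k a *s a)"
    using assms(2) unfolding int_span_altdef by blast
  ultimately have one: "(\<Sum>a\<in>A. k a * iform c a) = 1" by (simp add: iform_sum iform_smult)
  define P where "P = (\<Sum>a\<in>A. max (k a) 0 * iform c a)"
  define Q where "Q = (\<Sum>a\<in>A. max (- k a) 0 * iform c a)"
  have "k a * iform c a = max (k a) 0 * iform c a - max (- k a) 0 * iform c a" for a
    by (simp add: max_def algebra_simps)
  then have "P = Q + 1" using one by (simp add: P_def Q_def sum_subtractf)
  have "0 \<le> Q" unfolding Q_def using assms(3) by (intro sum_nonneg) simp
  have combination: "\<alpha> * Q + \<beta> * P \<in> iform c ` monoid_of A" if "0 \<le> \<alpha>" "0 \<le> \<beta>" for \<alpha> \<beta>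
  proof -
    define m where "m a = nat (\<alpha> * max (- k a) 0 + \<beta> * max (k a) 0)" for a
    have m: "int (m a) = \<alpha> * max (- k a) 0 + \<beta> * max (k a) 0" for a
      using that by (simp add: m_def)
    have "iform c (\<Sum>a\<in>A. int (m a) *s a) = (\<Sum>a\<in>A. int (m a) * iform c a)"
      by (simp add: iform_sum iform_smult)
    also have "\<dots> = \<alpha> * Q + \<beta> * P"
      unfolding m by (simp add: P_def Q_def sum_distrib_left sum.distrib algebra_simps)
    finally have "iform c (\<Sum>a\<in>A. int (m a) *s a) = \<alpha> * Q + \<beta> * P" .
    moreover have "(\<Sum>a\<in>A. int (m a) *s a) \<in> monoid_of A"
      unfolding monoid_of_altdef by blast
    ultimately show ?thesis by (rule image_eqI[OF sym])
  qed
  have "n \<in> iform c ` monoid_of A" if "Q * Q \<le> n" for n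
    using nonneg_combination_of_consecutive[OF \<open>0 \<le> Q\<close> that] combination \<open>P = Q + 1\<close> by metis
  then show ?thesis unfolding eventually_at_top_linorder by (intro exI[of _ "Q * Q"]) blast
qed

lemma one_le_facet_form_face_sum:
  assumes "finite A" "int_span A = UNIV" "\<sigma> facet_of real_cone A"
    and "\<tau> face_of real_cone A" "\<tau> \<noteq> {}" "\<not> \<tau> \<subseteq> \<sigma>"
  shows "1 \<le> iform (facet_form A \<sigma>) (\<Sum>{a\<in>A. rvec a \<in> \<tau>})"
proof -
  define c where "c = facet_form A \<sigma>"
  have "\<sigma> face_of real_cone A" "\<sigma> \<noteq> {}" using assms(3) by (auto simp: facet_of_def)
  have "\<exists>b\<in>A. rvec b \<in> \<tau> \<and> rvec b \<notin> \<sigma>"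
  proof (rule ccontr)
    assume "\<not> ?thesis"
    then have "{a\<in>A. rvec a \<in> \<tau>} \<subseteq> {a\<in>A. rvec a \<in> \<sigma>}" by blast
    then have "real_cone {a\<in>A. rvec a \<in> \<tau>} \<subseteq> real_cone {a\<in>A. rvec a \<in> \<sigma>}"
      by (rule real_cone_mono[rotated]) (simp add: assms(1))
    with assms(6) show False
      using face_of_real_cone_eq[OF assms(1,4,5)] face_of_real_cone_eq[OF assms(1) \<open>\<sigma> face_of _\<close> \<open>\<sigma> \<noteq> {}\<close>]
      by simp
  qed
  then obtain b where b: "b \<in> A" "rvec b \<in> \<tau>" "rvec b \<notin> \<sigma>" by blast
  then have "rform c (rvec b) \<noteq> 0"
    using facet_form(2)[OF assms(1-3)] rvec_in_real_cone[OF assms(1)] unfolding c_def by blast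
  then have "iform c b \<noteq> 0" by (simp add: rform_eq_inner of_int_iform[symmetric])
  moreover have nonneg: "0 \<le> iform c a" if "a \<in> A" for a
    unfolding c_def by (rule facet_form_nonneg[OF assms(1-3) that])
  ultimately have "1 \<le> iform c b" using b(1) by force
  also have "\<dots> \<le> (\<Sum>a\<in>{a\<in>A. rvec a \<in> \<tau>}. iform c a)"
    using b nonneg assms(1) by (intro member_le_sum) auto
  finally show ?thesis by (simp add: c_def iform_sum)
qed

section \<open>Shifting into the face\<close>

lemma eventually_shift_in_real_cone:
  assumes "finite B" "x \<in> rat_span_lattice B"
  shows "\<forall>\<^sub>F N in sequentially. rvec (x + int N *s \<Sum>B) \<in> real_cone B"
proof -
  obtain q where q: "rvec x = (\<Sum>b\<in>B. real_of_rat (q b) *\<^sub>R rvec b)"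
    using assms(2) by (rule rat_span_latticeD)
  have "\<forall>\<^sub>F N in sequentially. 0 \<le> real_of_rat (q b) + real N" for b
    using filterlim_real_sequentially[unfolded filterlim_at_top, rule_format, of "- real_of_rat (q b)"]
    by (rule eventually_mono) simp
  then have "\<forall>\<^sub>F N in sequentially. \<forall>b\<in>B. 0 \<le> real_of_rat (q b) + real N"
    by (intro eventually_ball_finite[OF assms(1)] ballI)
  then show ?thesis
  proof (rule eventually_mono)
    fix N assume nonneg: "\<forall>b\<in>B. 0 \<le> real_of_rat (q b) + real N"
    have "rvec (x + int N *s \<Sum>B) = (\<Sum>b\<in>B. (real_of_rat (q b) + real N) *\<^sub>R rvec b)"
      by (simp add: rvec_add rvec_smult rvec_sum q scaleR_add_left sum.distrib scaleR_sum_right)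
    with nonneg show "rvec (x + int N *s \<Sum>B) \<in> real_cone B"
      unfolding real_cone_def by (auto intro!: exI[of _ "\<lambda>b. real_of_rat (q b) + real N"])
  qed
qed

lemma filterlim_iform_shift:
  assumes "1 \<le> iform c s"
  shows "filterlim (\<lambda>N. iform c (x + int N *s s)) at_top sequentially"
  unfolding filterlim_at_top eventually_sequentially
proof
  fix Z
  have "Z \<le> iform c (x + int N *s s)" if "nat (Z - iform c x) \<le> N" for N
  proof -
    have "int N \<le> int N * iform c s" using mult_left_mono[OF assms, of "int N"] by simp
    then show ?thesis using that by (simp add: iform_add iform_smult)
  qed
  then show "\<exists>N0. \<forall>N\<ge>N0. Z \<le> iform c (x + int N *s s)" by blast
qed

lemma eventually_facet_form_shift_in_image:
  fixes x :: "int^'d"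
  assumes "finite A" "int_span A = UNIV" "\<sigma> facet_of real_cone A"
    and "\<tau> face_of real_cone A" "\<tau> \<noteq> {}"
  defines "y \<equiv> \<lambda>N. x + int N *s \<Sum>{a\<in>A. rvec a \<in> \<tau>}"
  shows "\<forall>\<^sub>F N in sequentially.
    rvec (y N) \<in> \<tau> \<longrightarrow> iform (facet_form A \<sigma>) (y N) \<in> iform (facet_form A \<sigma>) ` monoid_of A"
proof (cases "\<tau> \<subseteq> \<sigma>")
  case True
  have "iform (facet_form A \<sigma>) (y N) = iform (facet_form A \<sigma>) 0" if "rvec (y N) \<in> \<tau>" for N
  proof -
    have "rform (facet_form A \<sigma>) (rvec (y N)) = 0"
      using facet_form(1)[OF assms(1-3)] True that unfolding is_facet_form_def by blast
    then show ?thesis by (simp add: rform_eq_inner of_int_iform[symmetric])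
  qed
  moreover have "iform (facet_form A \<sigma>) 0 \<in> iform (facet_form A \<sigma>) ` monoid_of A"
    using zero_in_monoid_of by (rule imageI)
  ultimately show ?thesis by (auto intro: always_eventually)
next
  case False
  let ?c = "facet_form A \<sigma>"
  have "\<forall>\<^sub>F n in at_top. n \<in> iform ?c ` monoid_of A"
    using facet_form(1)[OF assms(1-3)] facet_form_nonneg[OF assms(1-3)]
    by (intro eventually_in_iform_monoid[OF _ assms(2)]) (auto simp: is_facet_form_def)
  moreover have "filterlim (\<lambda>N. iform ?c (y N)) at_top sequentially"
    unfolding y_def
    by (rule filterlim_iform_shift[OF one_le_facet_form_face_sum[OF assms(1-5) False]])
  ultimately show ?thesis by (rule eventually_compose_filterlim[THEN eventually_mono]) simp
qed

lemma eventually_face_shift_in_monoid: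
  assumes "finite A" "int_span A = UNIV" "scored A" "\<tau> face_of real_cone A" "\<tau> \<noteq> {}"
    and "x \<in> rat_span_lattice {a\<in>A. rvec a \<in> \<tau>}"
  shows "\<forall>\<^sub>F N in sequentially.
    x + int N *s \<Sum>{a\<in>A. rvec a \<in> \<tau>} \<in> monoid_of {a\<in>A. rvec a \<in> \<tau>}"
proof -
  define B where "B = {a\<in>A. rvec a \<in> \<tau>}"
  define y where "y N = x + int N *s \<Sum>B" for N
  have "finite B" using assms(1) by (simp add: B_def)
  have in_face: "\<forall>\<^sub>F N in sequentially. rvec (y N) \<in> \<tau>"
    using eventually_shift_in_real_cone[OF \<open>finite B\<close>] assms(6) face_of_real_cone_eq[OF assms(1,4,5)]
    by (simp add: y_def B_def)
  have "\<forall>\<^sub>F N in sequentially. \<forall>\<sigma>\<in>{\<sigma>. \<sigma> facet_of real_cone A}.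
      rvec (y N) \<in> \<tau> \<longrightarrow> iform (facet_form A \<sigma>) (y N) \<in> iform (facet_form A \<sigma>) ` monoid_of A"
    unfolding y_def B_def
    by (intro eventually_ball_finite[OF facets_finite[OF assms(1)]] ballI)
       (auto intro: eventually_facet_form_shift_in_image[OF assms(1,2) _ assms(4,5)])
  then have "\<forall>\<^sub>F N in sequentially. y N \<in> monoid_of B"
    using in_face
  proof eventually_elim
    case (elim N)
    from assms(3) have "y N \<in> monoid_of A"
      unfolding scored_def by (rule ssubst) (use elim in auto)
    then show "y N \<in> monoid_of B"
      using monoid_of_face[OF assms(1,4)] elim(2) by (simp add: B_def)
  qed
  then show ?thesis by (simp add: y_def B_def)
qed

theorem lemma8p11:
  fixes A :: "(int ^ 'd) set"
  assumes "finite A"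
    and "int_span A = UNIV"
    and "scored A"
    and "\<tau> face_of real_cone A"
  shows "rat_span_lattice {a\<in>A. rvec a \<in> \<tau>} = int_span {a\<in>A. rvec a \<in> \<tau>}"
proof (cases "\<tau> = {}")
  case True
  then show ?thesis by (auto simp: rat_span_lattice_def int_span_def vec_eq_iff)
next
  case False
  define B where "B = {a\<in>A. rvec a \<in> \<tau>}"
  have "rat_span_lattice B \<subseteq> int_span B"
  proof
    fix x assume "x \<in> rat_span_lattice B"
    then obtain N where "x + int N *s \<Sum>B \<in> monoid_of B"
      using eventually_face_shift_in_monoid[OF assms False] unfolding B_def eventually_sequentially
      by blast
    then have "(x + int N *s \<Sum>B) - int N *s \<Sum>B \<in> int_span B"
      by (rule monoid_of_diff_sum_in_int_span)
    then show "x \<in> int_span B" by simp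
  qed
  with int_span_subset_rat_span_lattice show ?thesis unfolding B_def by blast
qed

end
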